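(* Let $t\ge1$, let $\mathcal{F},\mathcal{G}\subseteq 2^{[k]}$ be cross $t$-intersecting families and let $1\le i<j\le k$. Suppose that $a$ is the maximal necessary intersection point of $\mathcal{F}$ and $\mathcal{G}$. Then $|[a-1]\cap F\cap G|\ge t-1$ for all $F\in\mathcal{F}$ and $G\in\mathcal{G}$. Moreover, $s_{i,j}(\mathcal{F})$ and $s_{i,j}(\mathcal{G})$ are cross $t$-intersecting and their maximal necessary intersection point is at most $a$.
   Context: Families $\mathcal{F},\mathcal{G}$ are cross $t$-intersecting if $|F\cap G|\ge t$ for all $F\in\mathcal{F},G\in\mathcal{G}$. For cross $t$-intersecting $\mathcal{F},\mathcal{G}\subseteq2^{[k]}$, an element $a\in[k]$ is a necessary intersection point of $\mathcal{F}$ and $\mathcal{G}$ if there exist $F\in\mathcal{F}$, $G\in\mathcal{G}$ with $|[a]\cap F\cap G|=t$ and $a\in F\cap G$; the maximal necessary intersection point is the largest such $a$. For $i<j$, the shifting operator is $s_{i,j}(\mathcal{F})=\{s_{i,j}(F):F\in\mathcal{F}\}$ where $s_{i,j}(F)=(F\setminus\{j\})\cup\{i\}$ if $j\in F$, $i\notin F$ and $(F\setminus\{j\})\cup\{i\}\notin\mathcal{F}$, and $s_{i,j}(F)=F$ otherwise. $[0]=\emptyset$. *)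

theory Defs
  imports Main
begin

text \<open>Ground set [k] = {1..k}; [0] = {}.\<close>

definition cross_t_intersecting :: "nat \<Rightarrow> nat set set \<Rightarrow> nat set set \<Rightarrow> bool" where
  "cross_t_intersecting t \<F> \<G> \<longleftrightarrow> (\<forall>F\<in>\<F>. \<forall>G\<in>\<G>. t \<le> card (F \<inter> G))"

definition necessary_intersection_point ::
  "nat \<Rightarrow> nat \<Rightarrow> nat set set \<Rightarrow> nat set set \<Rightarrow> nat \<Rightarrow> bool" where
  "necessary_intersection_point k t \<F> \<G> a \<longleftrightarrow>
     a \<in> {1..k} \<and> (\<exists>F\<in>\<F>. \<exists>G\<in>\<G>. card ({1..a} \<inter> F \<inter> G) = t \<and> a \<in> F \<inter> G)"

definition max_necessary_intersection_point ::
  "nat \<Rightarrow> nat \<Rightarrow> nat set set \<Rightarrow> nat set set \<Rightarrow> nat \<Rightarrow> bool" where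
  "max_necessary_intersection_point k t \<F> \<G> a \<longleftrightarrow>
     necessary_intersection_point k t \<F> \<G> a \<and>
     (\<forall>b. necessary_intersection_point k t \<F> \<G> b \<longrightarrow> b \<le> a)"

definition shift_set :: "nat \<Rightarrow> nat \<Rightarrow> nat set set \<Rightarrow> nat set \<Rightarrow> nat set" where
  "shift_set i j \<F> F =
     (if j \<in> F \<and> i \<notin> F \<and> insert i (F - {j}) \<notin> \<F> then insert i (F - {j}) else F)"

definition shift_family :: "nat \<Rightarrow> nat \<Rightarrow> nat set set \<Rightarrow> nat set set" where
  "shift_family i j \<F> = shift_set i j \<F> ` \<F>"

end

theory Submission
  imports Defs
begin

text \<open>
  Cross \<open>t\<close>-intersection makes every \<open>F \<inter> G\<close> have a \<open>t\<close>-th smallest element \<open>b\<close>, and \<open>b\<close> is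
  a necessary intersection point; so all necessary intersection points are at most \<open>a\<close> exactly
  when \<open>[a]\<close> meets every \<open>F \<inter> G\<close> in at least \<open>t\<close> points. Dropping \<open>a\<close> from \<open>[a]\<close> loses at
  most one point. For \<open>i < j\<close> the segment \<open>[a]\<close> is closed under replacing \<open>j\<close> by \<open>i\<close>, and for
  any such set \<open>X\<close> the classical shifting argument shows that \<open>s\<^sub>i\<^sub>,\<^sub>j\<close> preserves
  \<open>|X \<inter> F \<inter> G| \<ge> t\<close>. Taking \<open>X = \<nat>\<close> and \<open>X = [a]\<close> gives the claims about the shifted families.
\<close>

lemma card_Int_atLeastAtMost_Suc:
  "card ({1..Suc n} \<inter> C) = (if Suc n \<in> C then Suc (card ({1..n} \<inter> C)) else card ({1..n} \<inter> C))"
proof -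
  have "{1..Suc n} \<inter> C = (if Suc n \<in> C then insert (Suc n) ({1..n} \<inter> C) else {1..n} \<inter> C)"
    by (auto simp: le_Suc_eq)
  then show ?thesis by simp
qed

lemma obtain_card_atLeastAtMost_Int_eq:
  fixes C :: "nat set"
  assumes "1 \<le> t" and "t \<le> card ({1..n} \<inter> C)"
  obtains b where "b \<in> {1..n}" "b \<in> C" "card ({1..b} \<inter> C) = t"
  using assms
proof (induction n)
  case 0
  then show ?case by simp
next
  case (Suc n)
  show ?case
  proof (cases "t \<le> card ({1..n} \<inter> C)")
    case True
    show ?thesis
      by (rule Suc.IH[OF _ Suc.prems(2) True], rule Suc.prems(1)) auto
  next
    case False
    then have "Suc n \<in> C" "card ({1..Suc n} \<inter> C) = t"
      using Suc.prems(3) card_Int_atLeastAtMost_Suc[of n C] by (auto split: if_splits)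
    then show ?thesis using Suc.prems(1)[of "Suc n"] by simp
  qed
qed

lemma necessary_intersection_point_le_if_card_Int_ge:
  assumes "\<forall>F\<in>\<F>. \<forall>G\<in>\<G>. t \<le> card ({1..a} \<inter> F \<inter> G)"
    and "necessary_intersection_point k t \<F> \<G> b"
  shows "b \<le> a"
proof (rule ccontr)
  assume "\<not> b \<le> a"
  obtain F G where "F \<in> \<F>" "G \<in> \<G>" and b: "b \<in> F \<inter> G"
    and card_b: "card ({1..b} \<inter> F \<inter> G) = t"
    using assms(2) unfolding necessary_intersection_point_def by blast
  have "insert b ({1..a} \<inter> F \<inter> G) \<subseteq> {1..b} \<inter> F \<inter> G"
    using b \<open>\<not> b \<le> a\<close> by auto
  then have "card (insert b ({1..a} \<inter> F \<inter> G)) \<le> t"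
    using card_b by (metis card_mono finite_Int finite_atLeastAtMost)
  moreover have "b \<notin> {1..a} \<inter> F \<inter> G" using \<open>\<not> b \<le> a\<close> by simp
  ultimately have "card ({1..a} \<inter> F \<inter> G) < t" by simp
  with assms(1) \<open>F \<in> \<F>\<close> \<open>G \<in> \<G>\<close> show False by (meson not_le)
qed

lemma card_Int_ge_if_necessary_intersection_points_le:
  assumes "1 \<le> t" and "\<F> \<subseteq> Pow {1..k}" and "cross_t_intersecting t \<F> \<G>"
    and "\<And>b. necessary_intersection_point k t \<F> \<G> b \<Longrightarrow> b \<le> a"
    and "F \<in> \<F>" and "G \<in> \<G>"
  shows "t \<le> card ({1..a} \<inter> F \<inter> G)"
proof -
  have "{1..k} \<inter> (F \<inter> G) = F \<inter> G" using assms(2,5) by auto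
  then have "t \<le> card ({1..k} \<inter> (F \<inter> G))"
    using assms(3,5,6) by (simp add: cross_t_intersecting_def)
  with assms(1) obtain b where b: "b \<in> {1..k}" "b \<in> F \<inter> G"
    and card_b: "card ({1..b} \<inter> (F \<inter> G)) = t"
    by (rule obtain_card_atLeastAtMost_Int_eq)
  have "necessary_intersection_point k t \<F> \<G> b"
    unfolding necessary_intersection_point_def using b card_b assms(5,6) by (auto simp: Int_assoc)
  then have "b \<le> a" by (rule assms(4))
  then have "{1..b} \<inter> (F \<inter> G) \<subseteq> {1..a} \<inter> (F \<inter> G)" by auto
  then have "card ({1..b} \<inter> (F \<inter> G)) \<le> card ({1..a} \<inter> (F \<inter> G))" by (intro card_mono) auto
  with card_b show ?thesis by (simp add: Int_assoc)
qed

lemma card_Int_swap_le: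
  assumes "finite B" and "j \<in> B" and "i \<notin> B" and "j \<in> X \<Longrightarrow> i \<in> X"
  shows "card (X \<inter> B) \<le> card (X \<inter> insert i (B - {j}))"
proof (cases "j \<in> X")
  case True
  then have "X \<inter> insert i (B - {j}) = insert i (X \<inter> B - {j})" using assms(4) by blast
  then show ?thesis using True assms(1-3) by (simp add: card_Suc_Diff1)
next
  case False
  then have "X \<inter> B \<subseteq> X \<inter> insert i (B - {j})" by blast
  then show ?thesis using assms(1) by (intro card_mono) auto
qed

lemma card_Int_swap_left_ge:
  assumes "finite F" and "j \<in> F" and "i \<notin> F" and X: "j \<in> X \<Longrightarrow> i \<in> X"
    and "t \<le> card (X \<inter> F \<inter> G)"
    and "j \<in> G \<Longrightarrow> i \<notin> G \<Longrightarrow> t \<le> card (X \<inter> F \<inter> insert i (G - {j}))"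
  shows "t \<le> card (X \<inter> insert i (F - {j}) \<inter> G)"
proof -
  consider "j \<notin> G" | "j \<in> G" "i \<in> G" | "j \<in> G" "i \<notin> G" by blast
  then show ?thesis
  proof cases
    case 1
    then have "X \<inter> F \<inter> G \<subseteq> X \<inter> insert i (F - {j}) \<inter> G" by blast
    then have "card (X \<inter> F \<inter> G) \<le> card (X \<inter> insert i (F - {j}) \<inter> G)"
      using assms(1) by (intro card_mono) auto
    with assms(5) show ?thesis by linarith
  next
    case 2
    then have "X \<inter> insert i (F - {j}) \<inter> G = X \<inter> insert i (F \<inter> G - {j})" by blast
    moreover have "card (X \<inter> (F \<inter> G)) \<le> card (X \<inter> insert i (F \<inter> G - {j}))"
      using 2 assms(1-3) by (intro card_Int_swap_le X) auto
    ultimately show ?thesis using assms(5) by (simp add: Int_assoc)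
  next
    case 3
    \<comment> \<open>as \<open>i \<notin> F \<union> G\<close>, moving \<open>j\<close> to \<open>i\<close> in \<open>F\<close> or in \<open>G\<close> gives the same intersection\<close>
    then have "X \<inter> insert i (F - {j}) \<inter> G = X \<inter> F \<inter> insert i (G - {j})" using assms(3) by blast
    then show ?thesis using 3 assms(6) by simp
  qed
qed

lemma shift_set_cases:
  obtains (moved) "j \<in> F" "i \<notin> F" "insert i (F - {j}) \<notin> \<F>"
    "shift_set i j \<F> F = insert i (F - {j})"
  | (fixed) "j \<in> F \<Longrightarrow> i \<notin> F \<Longrightarrow> insert i (F - {j}) \<in> \<F>" "shift_set i j \<F> F = F"
  unfolding shift_set_def by (cases "j \<in> F \<and> i \<notin> F \<and> insert i (F - {j}) \<notin> \<F>") auto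

lemma card_Int_shift_set_ge:
  assumes X: "j \<in> X \<Longrightarrow> i \<in> X"
    and fin: "\<forall>F\<in>\<F>. finite F" "\<forall>G\<in>\<G>. finite G"
    and H: "\<forall>F\<in>\<F>. \<forall>G\<in>\<G>. t \<le> card (X \<inter> F \<inter> G)"
    and F: "F \<in> \<F>" and G: "G \<in> \<G>"
  shows "t \<le> card (X \<inter> shift_set i j \<F> F \<inter> shift_set i j \<G> G)"
proof (cases rule: shift_set_cases[of j F i \<F>])
  case F_moved: moved
  show ?thesis
  proof (cases rule: shift_set_cases[of j G i \<G>])
    case moved
    have "card (X \<inter> (F \<inter> G)) \<le> card (X \<inter> insert i (F \<inter> G - {j}))"
      using F_moved moved fin F by (intro card_Int_swap_le X) auto
    moreover have "X \<inter> shift_set i j \<F> F \<inter> shift_set i j \<G> G = X \<inter> insert i (F \<inter> G - {j})"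
      using F_moved moved by auto
    moreover have "t \<le> card (X \<inter> (F \<inter> G))" using H F G by (simp add: Int_assoc)
    ultimately show ?thesis by simp
  next
    case fixed
    have "t \<le> card (X \<inter> insert i (F - {j}) \<inter> G)"
      using F_moved fin F G by (intro card_Int_swap_left_ge X; use H fixed(1) in blast)
    then show ?thesis using F_moved fixed by simp
  qed
next
  case F_fixed: fixed
  show ?thesis
  proof (cases rule: shift_set_cases[of j G i \<G>])
    case moved
    have "t \<le> card (X \<inter> insert i (G - {j}) \<inter> F)"
      using F_fixed moved fin H F G by (intro card_Int_swap_left_ge X) (auto simp: Int_ac)
    moreover have "X \<inter> insert i (G - {j}) \<inter> F = X \<inter> F \<inter> insert i (G - {j})" by blast
    ultimately show ?thesis using F_fixed moved by simp
  next
    case fixed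
    then show ?thesis using F_fixed H F G by simp
  qed
qed

lemma shift_family_card_Int_ge:
  assumes "j \<in> X \<Longrightarrow> i \<in> X" and "\<forall>F\<in>\<F>. finite F" and "\<forall>G\<in>\<G>. finite G"
    and "\<forall>F\<in>\<F>. \<forall>G\<in>\<G>. t \<le> card (X \<inter> F \<inter> G)"
  shows "\<forall>F\<in>shift_family i j \<F>. \<forall>G\<in>shift_family i j \<G>. t \<le> card (X \<inter> F \<inter> G)"
  unfolding shift_family_def using card_Int_shift_set_ge[OF assms] by blast

lemma cross_t_intersecting_shift_family:
  assumes "\<forall>F\<in>\<F>. finite F" and "\<forall>G\<in>\<G>. finite G" and "cross_t_intersecting t \<F> \<G>"
  shows "cross_t_intersecting t (shift_family i j \<F>) (shift_family i j \<G>)"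
  using shift_family_card_Int_ge[of j UNIV i \<F> \<G> t] assms
  by (simp add: cross_t_intersecting_def)

theorem lemma3p4:
  fixes k t i j a :: nat and \<F> \<G> :: "nat set set"
  assumes "t \<ge> 1"
    and "\<F> \<subseteq> Pow {1..k}" and "\<G> \<subseteq> Pow {1..k}"
    and "cross_t_intersecting t \<F> \<G>"
    and "1 \<le> i" and "i < j" and "j \<le> k"
    and "max_necessary_intersection_point k t \<F> \<G> a"
  shows "(\<forall>F\<in>\<F>. \<forall>G\<in>\<G>. t - 1 \<le> card ({1..a - 1} \<inter> F \<inter> G))
         \<and> cross_t_intersecting t (shift_family i j \<F>) (shift_family i j \<G>)
         \<and> (\<forall>b. necessary_intersection_point k t (shift_family i j \<F>) (shift_family i j \<G>) b
                  \<longrightarrow> b \<le> a)"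
proof -
  have finite: "\<forall>F\<in>\<F>. finite F" "\<forall>G\<in>\<G>. finite G"
    using assms(2,3) by (auto intro: finite_subset)
  have "1 \<le> a" and a_max: "\<And>b. necessary_intersection_point k t \<F> \<G> b \<Longrightarrow> b \<le> a"
    using assms(8) by (auto simp: max_necessary_intersection_point_def necessary_intersection_point_def)
  have upto_a: "\<forall>F\<in>\<F>. \<forall>G\<in>\<G>. t \<le> card ({1..a} \<inter> F \<inter> G)"
    using card_Int_ge_if_necessary_intersection_points_le[OF assms(1,2,4) a_max] by blast
  have "\<forall>F\<in>\<F>. \<forall>G\<in>\<G>. t - 1 \<le> card ({1..a - 1} \<inter> F \<inter> G)"
  proof (intro ballI)
    fix F G assume "F \<in> \<F>" "G \<in> \<G>"
    then have "t \<le> card ({1..Suc (a - 1)} \<inter> (F \<inter> G))"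
      using upto_a \<open>1 \<le> a\<close> by (simp add: Int_assoc)
    then show "t - 1 \<le> card ({1..a - 1} \<inter> F \<inter> G)"
      using card_Int_atLeastAtMost_Suc[of "a - 1" "F \<inter> G"] by (simp add: Int_assoc split: if_splits)
  qed
  moreover have "cross_t_intersecting t (shift_family i j \<F>) (shift_family i j \<G>)"
    using finite assms(4) by (rule cross_t_intersecting_shift_family)
  moreover have "\<forall>F\<in>shift_family i j \<F>. \<forall>G\<in>shift_family i j \<G>. t \<le> card ({1..a} \<inter> F \<inter> G)"
    by (rule shift_family_card_Int_ge[OF _ finite upto_a]) (use assms(5,6) in auto)
  then have "\<forall>b. necessary_intersection_point k t (shift_family i j \<F>) (shift_family i j \<G>) b \<longrightarrow> b \<le> a"
    by (blast intro: necessary_intersection_point_le_if_card_Int_ge)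
  ultimately show ?thesis by blast
qed

end
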